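(* Let $\mu\in(0,1/2]$. The function $R_S(g,c)=2\sqrt{\frac{\sqrt{1-gc}}{g-c+2\sqrt{(1-2\mu)^2-gc}}}\,\frac{K(r_2)}{K(k_1)}$ has no critical point in the region $S$, i.e. its gradient with respect to $(g,c)$ is nonzero at every point of $S$.
   Context: $c_J=-1-2\sqrt{\mu(1-\mu)}$, $c_h=-1+2\mu$, $S=\{c<c_J,\ -c-2<g<-c-2(1-2\mu)\}\cup\{c_J\le c<c_h,\ (1-2\mu)^2/c<g<-c-2(1-2\mu)\}$. $K(k)=\frac{\pi}{2}\sum_{n\ge0}\big(\frac{(2n-1)!!}{(2n)!!}\big)^2k^{2n}$ is the complete elliptic integral of the first kind, $k_1^2=\frac12\big(1-\frac{g-c}{2\sqrt{1-gc}}\big)$, $r_2^2=\frac{g-c-2\sqrt{(1-2\mu)^2-gc}}{g-c+2\sqrt{(1-2\mu)^2-gc}}$. *)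

theory Defs
  imports "HOL-Analysis.Analysis"
begin

text \<open>Double factorial, with the convention 0!! = 1 (so that (2*0-1)!! = 1, matching (-1)!! = 1).\<close>
fun dfact :: "nat \<Rightarrow> nat" where
  "dfact 0 = 1"
| "dfact (Suc 0) = 1"
| "dfact (Suc (Suc n)) = Suc (Suc n) * dfact n"

text \<open>Complete elliptic integral of the first kind, via its power series in the modulus k.\<close>
definition ellK :: "real \<Rightarrow> real" where
  "ellK k = pi / 2 * (\<Sum>n. (real (dfact (2*n - 1)) / real (dfact (2*n)))^2 * k^(2*n))"

definition cJ :: "real \<Rightarrow> real" where
  "cJ \<mu> = -1 - 2 * sqrt (\<mu> * (1 - \<mu>))"

definition ch :: "real \<Rightarrow> real" where
  "ch \<mu> = -1 + 2 * \<mu>"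

definition regionS :: "real \<Rightarrow> (real \<times> real) set" where
  "regionS \<mu> = {(g, c). c < cJ \<mu> \<and> -c - 2 < g \<and> g < -c - 2 * (1 - 2*\<mu>)}
             \<union> {(g, c). cJ \<mu> \<le> c \<and> c < ch \<mu> \<and> (1 - 2*\<mu>)^2 / c < g \<and> g < -c - 2 * (1 - 2*\<mu>)}"

text \<open>Moduli k_1 and r_2, given as square roots of the stated k_1^2 and r_2^2.\<close>
definition k1 :: "real \<Rightarrow> real \<Rightarrow> real" where
  "k1 g c = sqrt ((1 - (g - c) / (2 * sqrt (1 - g*c))) / 2)"

definition r2 :: "real \<Rightarrow> real \<Rightarrow> real \<Rightarrow> real" where
  "r2 \<mu> g c = sqrt ((g - c - 2 * sqrt ((1 - 2*\<mu>)^2 - g*c)) / (g - c + 2 * sqrt ((1 - 2*\<mu>)^2 - g*c)))"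

definition RS :: "real \<Rightarrow> real \<Rightarrow> real \<Rightarrow> real" where
  "RS \<mu> g c = 2 * sqrt (sqrt (1 - g*c) / (g - c + 2 * sqrt ((1 - 2*\<mu>)^2 - g*c)))
               * ellK (r2 \<mu> g c) / ellK (k1 g c)"

end

theory Submission
  imports Defs
begin

text \<open>
  \<open>RS\<close> depends on \<open>(g, c)\<close> only through \<open>u = g - c\<close> and \<open>w = g c\<close>. Along a curve on
  which \<open>x = u / sqrt (1 - w)\<close> is constant the modulus \<open>k\<^sub>1 = sqrt ((1 - x/2) / 2)\<close> is
  constant, and the numerator of \<open>RS\<close> becomes
  \<open>2 sqrt (1 / (x + 2\<rho>)) K (sqrt ((x - 2\<rho>) / (x + 2\<rho>)))\<close> with
  \<open>\<rho> = sqrt (((1 - 2\<mu>)\<^sup>2 - w) / (1 - w))\<close>. Both factors strictly decrease in \<open>\<rho>\<close>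
  (the second because \<open>K\<close> has a power series with nonnegative coefficients), and \<open>\<rho>\<close>
  strictly decreases in \<open>w\<close>, so \<open>RS\<close> has nonzero derivative along the curve. On \<open>S\<close> we
  have \<open>g + c < 0\<close>, where \<open>(g, c) \<mapsto> (g - c, g c)\<close> is locally invertible, so such a
  curve passes through every point of \<open>S\<close> and the gradient there cannot vanish.
\<close>

section \<open>Gradients detected along curves\<close>

lemma linear_real_pair_eq:
  fixes D :: "real \<times> real \<Rightarrow> real"
  assumes "linear D"
  shows "D = (\<lambda>h. D (1, 0) * fst h + D (0, 1) * snd h)"
proof
  fix h :: "real \<times> real"
  have "D h = D (fst h *\<^sub>R (1, 0) + snd h *\<^sub>R (0, 1))" by (cases h) simp
  also have "\<dots> = fst h * D (1, 0) + snd h * D (0, 1)"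
    by (simp only: linear_add[OF assms] linear_scale[OF assms] real_scaleR_def)
  finally show "D h = D (1, 0) * fst h + D (0, 1) * snd h" by simp
qed

lemma nonzero_gradient_from_curve:
  fixes f :: "real \<times> real \<Rightarrow> real" and \<gamma> :: "real \<Rightarrow> real \<times> real"
  assumes f: "(f has_derivative D) (at (\<gamma> t0))" and \<gamma>: "(\<gamma> has_derivative G) (at t0)"
    and along: "((\<lambda>t. f (\<gamma> t)) has_real_derivative e) (at t0)" and "e \<noteq> 0"
  shows "\<exists>dg dc. (f has_derivative (\<lambda>h. dg * fst h + dc * snd h)) (at (\<gamma> t0)) \<and> (dg, dc) \<noteq> (0, 0)"
proof (intro exI conjI)
  have D: "D = (\<lambda>h. D (1, 0) * fst h + D (0, 1) * snd h)"
    using f by (intro linear_real_pair_eq has_derivative_linear)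
  then show "(f has_derivative (\<lambda>h. D (1, 0) * fst h + D (0, 1) * snd h)) (at (\<gamma> t0))"
    using f by simp
  have "(\<lambda>h. D (G h)) = (*) e"
    using has_derivative_compose[OF \<gamma> f] along
    unfolding has_field_derivative_def by (rule has_derivative_unique)
  then have "D (G 1) \<noteq> 0"
    using \<open>e \<noteq> 0\<close> by (metis mult.right_neutral)
  then show "(D (1, 0), D (0, 1)) \<noteq> (0, 0)"
    by (subst (asm) D) auto
qed

lemma curve_with_difference_and_product:
  fixes u w :: "real \<Rightarrow> real"
  assumes u: "(u has_real_derivative u') (at t0)" and w: "(w has_real_derivative w') (at t0)"
    and u0: "u t0 = g - c" and w0: "w t0 = g * c" and "g + c < 0"
  shows "\<exists>\<gamma> G. (\<gamma> has_derivative G) (at t0) \<and> \<gamma> t0 = (g, c) \<and>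
    (\<forall>\<^sub>F t in nhds t0. fst (\<gamma> t) - snd (\<gamma> t) = u t \<and> fst (\<gamma> t) * snd (\<gamma> t) = w t)"
proof -
  define discr where "discr t = (u t)^2 + 4 * w t" for t
  \<comment> \<open>\<open>g\<close> and \<open>-c\<close> are the roots of \<open>X\<^sup>2 - u X - w\<close>; the branch of the square root is the one with \<open>g + c < 0\<close>.\<close>
  define \<gamma> where "\<gamma> t = ((u t - sqrt (discr t)) / 2, (- u t - sqrt (discr t)) / 2)" for t
  have discr0: "discr t0 = (g + c)^2"
    unfolding discr_def u0 w0 by (simp add: power2_eq_square algebra_simps)
  then have "0 < discr t0" using \<open>g + c < 0\<close> by simp
  have "\<gamma> t0 = (g, c)"
    using discr0 \<open>g + c < 0\<close> u0 by (simp add: \<gamma>_def)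
  moreover have "\<exists>G. (\<gamma> has_derivative G) (at t0)"
    unfolding \<gamma>_def discr_def
    using u w \<open>0 < discr t0\<close> unfolding has_field_derivative_def discr_def
    by (intro exI) (rule derivative_intros | (simp; fail))+
  moreover have "\<forall>\<^sub>F t in nhds t0. 0 < discr t"
  proof -
    have "isCont discr t0"
      unfolding discr_def using u w by (intro continuous_intros DERIV_isCont)
    then have "(discr \<longlongrightarrow> discr t0) (nhds t0)"
      by (simp add: isCont_def tendsto_at_iff_tendsto_nhds)
    from order_tendstoD(1)[OF this \<open>0 < discr t0\<close>] show ?thesis .
  qed
  then have "\<forall>\<^sub>F t in nhds t0. fst (\<gamma> t) - snd (\<gamma> t) = u t \<and> fst (\<gamma> t) * snd (\<gamma> t) = w t"
  proof eventually_elim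
    case (elim t)
    then have "(sqrt (discr t))^2 = (u t)^2 + 4 * w t" by (simp add: discr_def)
    then show ?case
      by (simp add: \<gamma>_def field_simps power2_eq_square)
  qed
  ultimately show ?thesis by blast
qed

section \<open>The complete elliptic integral \<open>K\<close>\<close>

lemma dfact_pos: "0 < dfact n"
  by (induction n rule: dfact.induct) auto

lemma dfact_le_Suc: "dfact n \<le> dfact (Suc n)"
proof (induction n rule: dfact.induct)
  case (3 n)
  have "dfact (Suc (Suc n)) = Suc (Suc n) * dfact n" by simp
  also have "\<dots> \<le> Suc (Suc (Suc n)) * dfact (Suc n)"
    using 3 by (intro mult_le_mono) auto
  finally show ?case by simp
qed auto

definition ellK_coeff :: "nat \<Rightarrow> real" where
  "ellK_coeff n = (real (dfact (2*n - 1)) / real (dfact (2*n)))^2"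

lemma ellK_coeff_le_1: "ellK_coeff n \<le> 1"
proof -
  have "dfact (2*n - 1) \<le> dfact (2*n)"
    using dfact_le_Suc[of "2*n - 1"] by (cases n) auto
  then have "real (dfact (2*n - 1)) / real (dfact (2*n)) \<le> 1"
    using dfact_pos[of "2*n"] by simp
  then show ?thesis
    unfolding ellK_coeff_def by (simp add: power_le_one)
qed

lemma ellK_eq_series: "ellK k = pi/2 * (\<Sum>n. ellK_coeff n * (k^2)^n)"
  unfolding ellK_def ellK_coeff_def by (simp add: power_mult)

lemma summable_ellK_series:
  assumes "\<bar>y\<bar> < 1"
  shows "summable (\<lambda>n. ellK_coeff n * y^n)"
proof (rule summable_comparison_test)
  show "\<exists>N. \<forall>n\<ge>N. norm (ellK_coeff n * y^n) \<le> \<bar>y\<bar>^n"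
    using ellK_coeff_le_1
    by (auto simp: abs_mult power_abs ellK_coeff_def intro!: mult_left_le_one_le)
  show "summable (\<lambda>n. \<bar>y\<bar>^n)"
    using assms by (simp add: summable_geometric)
qed

definition ellK' :: "real \<Rightarrow> real" where
  "ellK' k = pi * k * (\<Sum>n. diffs ellK_coeff n * (k^2)^n)"

lemma ellK_has_real_derivative:
  assumes "\<bar>k\<bar> < 1"
  shows "(ellK has_real_derivative ellK' k) (at k)"
proof -
  have k2: "\<bar>k^2\<bar> < 1" using assms by (simp add: abs_square_less_1)
  have "((\<lambda>y. \<Sum>n. ellK_coeff n * y^n) has_real_derivative (\<Sum>n. diffs ellK_coeff n * (k^2)^n)) (at (k^2))"
    by (rule termdiffs_strong'[where K=1]) (use summable_ellK_series k2 in auto)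
  from DERIV_chain2[OF this DERIV_pow[of 2 k]]
  have "((\<lambda>k. \<Sum>n. ellK_coeff n * (k^2)^n) has_real_derivative
          (\<Sum>n. diffs ellK_coeff n * (k^2)^n) * (2 * k)) (at k)"
    by simp
  from DERIV_cmult[OF this, of "pi/2"] show ?thesis
    unfolding ellK_eq_series[abs_def] ellK'_def by (simp add: ac_simps)
qed

lemmas ellK_has_derivative_compose[derivative_intros] =
  ellK_has_real_derivative[THEN DERIV_compose_FDERIV]

lemma ellK'_nonneg:
  assumes "0 \<le> k" "k < 1"
  shows "0 \<le> ellK' k"
proof -
  have k2: "\<bar>k^2\<bar> < 1" using assms by (simp add: abs_square_less_1)
  have "summable (\<lambda>n. diffs ellK_coeff n * (k^2)^n)"
    by (rule termdiff_converges[where K=1]) (use summable_ellK_series k2 in auto)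
  then have "0 \<le> (\<Sum>n. diffs ellK_coeff n * (k^2)^n)"
    by (rule suminf_nonneg) (simp add: diffs_def ellK_coeff_def)
  then show ?thesis
    unfolding ellK'_def using assms by simp
qed

lemma ellK_pos:
  assumes "\<bar>k\<bar> < 1"
  shows "0 < ellK k"
proof -
  have k2: "\<bar>k^2\<bar> < 1" using assms by (simp add: abs_square_less_1)
  have "(\<Sum>n<1. ellK_coeff n * (k^2)^n) \<le> (\<Sum>n. ellK_coeff n * (k^2)^n)"
    by (rule sum_le_suminf) (use summable_ellK_series[OF k2] in \<open>auto simp: ellK_coeff_def\<close>)
  then show ?thesis
    unfolding ellK_eq_series by (simp add: ellK_coeff_def)
qed

section \<open>\<open>RS\<close> along level curves of \<open>k\<^sub>1\<close>\<close>

definition level_profile :: "real \<Rightarrow> real \<Rightarrow> real" where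
  "level_profile x \<rho> = 2 * sqrt (1 / (x + 2*\<rho>)) * ellK (sqrt ((x - 2*\<rho>) / (x + 2*\<rho>)))"

lemma level_profile_has_negative_derivative:
  assumes "0 < \<rho>" "2*\<rho> < x"
  shows "\<exists>d<0. (level_profile x has_real_derivative d) (at \<rho>)"
proof -
  define s where "s = x + 2*\<rho>"
  define r where "r = (x - 2*\<rho>) / s"
  have s: "0 < s" and r: "0 < r" "r < 1"
    using assms by (auto simp: s_def r_def divide_less_eq)
  have amplitude: "((\<lambda>\<rho>. 2 * sqrt (1 / (x + 2*\<rho>))) has_real_derivative
      - 2 * sqrt (1/s) / s) (at \<rho>)"
    using s by (auto intro!: derivative_eq_intros simp: s_def field_simps real_sqrt_divide)
  have "((\<lambda>\<rho>. (x - 2*\<rho>) / (x + 2*\<rho>)) has_real_derivative - 4 * x / s^2) (at \<rho>)"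
    using s by (auto intro!: derivative_eq_intros simp: s_def field_simps power2_eq_square)
  from DERIV_chain2[OF DERIV_real_sqrt this]
  have modulus: "((\<lambda>\<rho>. sqrt ((x - 2*\<rho>) / (x + 2*\<rho>))) has_real_derivative
      inverse (sqrt r) / 2 * (- 4 * x / s^2)) (at \<rho>)"
    using r by (simp add: r_def s_def)
  define d where "d = - 2 * sqrt (1/s) / s * ellK (sqrt r)
      + ellK' (sqrt r) * (inverse (sqrt r) / 2 * (- 4 * x / s^2)) * (2 * sqrt (1/s))"
  have "\<bar>sqrt ((x - 2*\<rho>) / (x + 2*\<rho>))\<bar> < 1"
    using r by (simp add: r_def s_def)
  from DERIV_mult[OF amplitude DERIV_chain2[OF ellK_has_real_derivative[OF this] modulus]]
  have "(level_profile x has_real_derivative d) (at \<rho>)"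
    unfolding level_profile_def[abs_def] d_def r_def s_def .
  moreover have "d < 0"
  proof -
    have "- 2 * sqrt (1/s) / s * ellK (sqrt r) < 0"
      using s r ellK_pos[of "sqrt r"] by (intro mult_neg_pos) auto
    moreover have "ellK' (sqrt r) * (inverse (sqrt r) / 2 * (- 4 * x / s^2)) * (2 * sqrt (1/s)) \<le> 0"
      using s r assms ellK'_nonneg[of "sqrt r"]
      by (intro mult_nonpos_nonneg mult_nonneg_nonpos) auto
    ultimately show ?thesis
      unfolding d_def by linarith
  qed
  ultimately show ?thesis by blast
qed

lemma sqrt_ratio_has_negative_derivative:
  fixes a2 w :: real
  assumes "a2 < 1" "w < a2"
  shows "\<exists>d<0. ((\<lambda>w. sqrt ((a2 - w) / (1 - w))) has_real_derivative d) (at w)"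
proof -
  define q where "q = (a2 - w) / (1 - w)"
  have q: "0 < q" using assms by (simp add: q_def)
  define d where "d = inverse (sqrt q) / 2 * ((a2 - 1) / (1 - w)^2)"
  have "((\<lambda>w. sqrt ((a2 - w) / (1 - w))) has_real_derivative d) (at w)"
    unfolding d_def q_def using assms q
    by (auto intro!: derivative_eq_intros simp: q_def field_simps power2_eq_square)
  moreover have "d < 0"
    unfolding d_def using assms q by (auto intro!: mult_pos_neg divide_neg_pos)
  ultimately show ?thesis by blast
qed

lemma RS_on_level_curve:
  assumes "g - c = x * sqrt (1 - w)" "g * c = w" "w < 1"
  shows "RS \<mu> g c = level_profile x (sqrt (((1 - 2*\<mu>)^2 - w) / (1 - w))) / ellK (sqrt ((1 - x/2) / 2))"
proof -
  define z where "z = sqrt (1 - w)"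
  define q where "q = sqrt ((1 - 2*\<mu>)^2 - w)"
  have z: "0 < z" using assms(3) by (simp add: z_def)
  have "sqrt (((1 - 2*\<mu>)^2 - w) / (1 - w)) = q / z"
    by (simp add: q_def z_def real_sqrt_divide)
  moreover have "x * z + 2 * q = z * (x + 2 * (q / z))" "x * z - 2 * q = z * (x - 2 * (q / z))"
    using z by (simp_all add: field_simps)
  ultimately show ?thesis
    unfolding RS_def r2_def k1_def level_profile_def assms(1,2) z_def[symmetric] q_def[symmetric]
    using z by simp
qed

lemma RS_on_level_curve_has_nonzero_derivative:
  fixes \<gamma> :: "real \<Rightarrow> real \<times> real"
  assumes "(1 - 2*\<mu>)^2 < 1" "w0 < (1 - 2*\<mu>)^2" "x < 2"
    and "2 * sqrt ((1 - 2*\<mu>)^2 - w0) < x * sqrt (1 - w0)"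
    and on_curve: "\<forall>\<^sub>F w in nhds w0. fst (\<gamma> w) - snd (\<gamma> w) = x * sqrt (1 - w) \<and> fst (\<gamma> w) * snd (\<gamma> w) = w"
  shows "\<exists>e. e \<noteq> 0 \<and> ((\<lambda>w. RS \<mu> (fst (\<gamma> w)) (snd (\<gamma> w))) has_real_derivative e) (at w0)"
proof -
  define a2 where "a2 = (1 - 2*\<mu>)^2"
  define \<rho> where "\<rho> w = sqrt ((a2 - w) / (1 - w))" for w
  define K0 where "K0 = ellK (sqrt ((1 - x/2) / 2))"
  have "w0 < 1" "0 < a2 - w0" using assms(1,2) by (simp_all add: a2_def)
  then have "0 < sqrt (a2 - w0)" by simp
  with assms(4) have "0 < x * sqrt (1 - w0)"
    unfolding a2_def by linarith
  with \<open>w0 < 1\<close> have "0 < x" by (simp add: zero_less_mult_iff)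
  have "0 < \<rho> w0" "2 * \<rho> w0 < x"
    using assms(4) \<open>w0 < 1\<close> \<open>0 < a2 - w0\<close> by (auto simp: a2_def \<rho>_def real_sqrt_divide divide_less_eq)
  obtain d\<rho> where "d\<rho> < 0" and d\<rho>: "(\<rho> has_real_derivative d\<rho>) (at w0)"
    using sqrt_ratio_has_negative_derivative assms(1,2) unfolding \<rho>_def[abs_def] a2_def by blast
  obtain d\<phi> where "d\<phi> < 0" and d\<phi>: "(level_profile x has_real_derivative d\<phi>) (at (\<rho> w0))"
    using level_profile_has_negative_derivative \<open>0 < \<rho> w0\<close> \<open>2 * \<rho> w0 < x\<close> by blast
  have "0 < K0"
    unfolding K0_def using \<open>0 < x\<close> \<open>x < 2\<close> by (intro ellK_pos) simp
  have "\<forall>\<^sub>F w in nhds w0. w < 1"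
    using eventually_nhds_in_open[of "{..<1}" w0] \<open>w0 < 1\<close> by simp
  with on_curve have "\<forall>\<^sub>F w in nhds w0. RS \<mu> (fst (\<gamma> w)) (snd (\<gamma> w)) = level_profile x (\<rho> w) / K0"
    by eventually_elim (auto simp: RS_on_level_curve a2_def \<rho>_def K0_def)
  with DERIV_cdivide[OF DERIV_chain2[OF d\<phi> d\<rho>], of K0]
  have "((\<lambda>w. RS \<mu> (fst (\<gamma> w)) (snd (\<gamma> w))) has_real_derivative d\<phi> * d\<rho> / K0) (at w0)"
    by (subst DERIV_cong_ev[OF refl]) auto
  moreover have "d\<phi> * d\<rho> / K0 \<noteq> 0"
    using \<open>d\<phi> < 0\<close> \<open>d\<rho> < 0\<close> \<open>0 < K0\<close> by simp
  ultimately show ?thesis by blast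
qed

section \<open>The region \<open>S\<close>\<close>

text \<open>With \<open>a = 1 - 2\<mu>\<close> and \<open>r = sqrt (\<mu> (1 - \<mu>))\<close> one has \<open>cJ \<mu> = -1 - 2r\<close>, \<open>ch \<mu> = -a\<close>
  and \<open>1 - a\<^sup>2 = 4r\<^sup>2\<close>.\<close>

lemma bounds_below_cJ:
  fixes a r g c :: real
  assumes "1 - a^2 = 4 * r^2" "0 \<le> r" "c < -1 - 2*r" "-c - 2 < g"
  shows "g * c < a^2" "0 < g - c"
proof -
  have "c < 0" using assms(2,3) by simp
  then have "g * c < (-c - 2) * c"
    using assms(4) by (simp add: mult_strict_right_mono_neg)
  moreover have "(2*r)^2 < (-(c + 1))^2"
    using assms(2,3) by (intro power_strict_mono) auto
  ultimately show "g * c < a^2"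
    using assms(1) by (simp add: power2_eq_square algebra_simps)
  show "0 < g - c" using assms(2-4) by simp
qed

lemma bounds_above_cJ:
  fixes a r g c :: real
  assumes "1 - a^2 = 4 * r^2" "0 \<le> a" "1 - a \<le> 2*r"
    and "-1 - 2*r \<le> c" "c < -a" "a^2 / c < g"
  shows "g * c < a^2" "-2 < g + c" "0 < g - c"
proof -
  have "c < 0" using assms(2,5) by simp
  then show gc: "g * c < a^2"
    using assms(6) by (simp add: divide_less_eq mult.commute)
  have "\<bar>c + 1\<bar> \<le> 2*r" using assms(3-5) by auto
  then have "(c + 1)^2 \<le> (2*r)^2"
    using abs_le_square_iff[of "c + 1" "2*r"] by simp
  then have "(g + c + 2) * c < 0"
    using gc assms(1) by (simp add: power2_eq_square algebra_simps)
  then show "-2 < g + c" using \<open>c < 0\<close> by (simp add: mult_less_0_iff)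
  have "a^2 < (-c)^2" using assms(2,5) by (intro power_strict_mono) auto
  then have "(g - c) * c < 0" using gc by (simp add: power2_eq_square algebra_simps)
  then show "0 < g - c" using \<open>c < 0\<close> by (simp add: mult_less_0_iff)
qed

lemma regionS_bounds:
  fixes \<mu> g c :: real
  assumes "0 < \<mu>" "\<mu> \<le> 1/2" and "(g, c) \<in> regionS \<mu>"
  shows "g + c < -2*(1 - 2*\<mu>)" "-2 < g + c" "0 < g - c" "g * c < (1 - 2*\<mu>)^2"
proof -
  define a where "a = 1 - 2*\<mu>"
  define r where "r = sqrt (\<mu> * (1 - \<mu>))"
  have "0 \<le> a" "0 \<le> r" using assms(1,2) by (simp_all add: a_def r_def)
  have "r^2 = \<mu> * (1 - \<mu>)" using assms(1,2) by (simp add: r_def)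
  then have a_r: "1 - a^2 = 4 * r^2" by (simp add: a_def power2_eq_square algebra_simps)
  have "sqrt (\<mu>^2) \<le> r"
    unfolding r_def using assms(1,2) by (intro real_sqrt_le_mono) (simp add: power2_eq_square)
  then have "1 - a \<le> 2*r" using assms(1) by (simp add: a_def)
  have cJ: "cJ \<mu> = -1 - 2*r" and ch: "ch \<mu> = -a"
    by (simp_all add: cJ_def ch_def r_def a_def)
  have "g + c < -2*a \<and> -2 < g + c \<and> 0 < g - c \<and> g * c < a^2"
  proof (cases "c < cJ \<mu>")
    case True
    with assms(3) have g: "-c - 2 < g" "g < -c - 2*a"
      unfolding regionS_def a_def by auto
    from True have c: "c < -1 - 2*r"
      unfolding cJ .
    show ?thesis
      using g bounds_below_cJ[OF a_r \<open>0 \<le> r\<close> c g(1)] by auto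
  next
    case False
    with assms(3) have "(g, c) \<in> {(g, c). cJ \<mu> \<le> c \<and> c < ch \<mu> \<and> (1 - 2*\<mu>)^2 / c < g \<and> g < -c - 2 * (1 - 2*\<mu>)}"
      unfolding regionS_def by blast
    then have "-1 - 2*r \<le> c" "c < -a" "a^2 / c < g" and g: "g < -c - 2*a"
      unfolding cJ ch a_def[symmetric] by simp_all
    from bounds_above_cJ[OF a_r \<open>0 \<le> a\<close> \<open>1 - a \<le> 2*r\<close> this(1-3)] show ?thesis
      using g by auto
  qed
  then show "g + c < -2*(1 - 2*\<mu>)" "-2 < g + c" "0 < g - c" "g * c < (1 - 2*\<mu>)^2"
    unfolding a_def by auto
qed

lemma regionS_moduli_bounds:
  fixes \<mu> g c :: real
  assumes "0 < \<mu>" "\<mu> \<le> 1/2" and "(g, c) \<in> regionS \<mu>"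
  shows "g + c < 0" "g * c < (1 - 2*\<mu>)^2" "(1 - 2*\<mu>)^2 < 1"
    and "2 * sqrt ((1 - 2*\<mu>)^2 - g*c) < g - c" "g - c < 2 * sqrt (1 - g*c)"
proof -
  note bounds = regionS_bounds[OF assms]
  show "g + c < 0" "g * c < (1 - 2*\<mu>)^2"
    using bounds assms(2) by auto
  show "(1 - 2*\<mu>)^2 < 1"
    using assms(1,2) mult_pos_pos[of \<mu> "1 - \<mu>"] by (simp add: power2_eq_square algebra_simps)
  have "4 * ((1 - 2*\<mu>)^2 - g*c) < (g - c)^2"
  proof -
    have "(2 * (1 - 2*\<mu>))^2 < (-(g + c))^2"
      using bounds(1) assms(2) by (intro power_strict_mono) auto
    then show ?thesis by (simp add: power2_eq_square algebra_simps)
  qed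
  then have "sqrt (4 * ((1 - 2*\<mu>)^2 - g*c)) < sqrt ((g - c)^2)"
    by (rule real_sqrt_less_mono)
  then show "2 * sqrt ((1 - 2*\<mu>)^2 - g*c) < g - c"
    using bounds(3) unfolding real_sqrt_mult by simp
  have "(g - c)^2 < 4 * (1 - g*c)"
  proof -
    have "(-(g + c))^2 < 2^2"
      using bounds(1,2) assms(2) by (intro power_strict_mono) auto
    then show ?thesis by (simp add: power2_eq_square algebra_simps)
  qed
  then have "sqrt ((g - c)^2) < sqrt (4 * (1 - g*c))"
    by (rule real_sqrt_less_mono)
  then show "g - c < 2 * sqrt (1 - g*c)"
    using bounds(3) unfolding real_sqrt_mult by simp
qed

lemma RS_differentiable:
  assumes "g * c < (1 - 2*\<mu>)^2" "(1 - 2*\<mu>)^2 < 1"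
    and "2 * sqrt ((1 - 2*\<mu>)^2 - g*c) < g - c" "g - c < 2 * sqrt (1 - g*c)"
  shows "(\<lambda>p. RS \<mu> (fst p) (snd p)) differentiable (at (g, c))"
proof -
  define z where "z = sqrt (1 - g*c)"
  define q where "q = sqrt ((1 - 2*\<mu>)^2 - g*c)"
  have z: "0 < z" and q: "0 < q"
    using assms(1,2) by (auto simp: z_def q_def)
  have "0 < g - c" using assms(3)[folded q_def] q by simp
  have den: "0 < g - c + 2*q" and amplitude: "0 < z / (g - c + 2*q)"
    using \<open>0 < g - c\<close> z q by simp_all
  have r: "0 < (g - c - 2*q) / (g - c + 2*q)" "(g - c - 2*q) / (g - c + 2*q) < 1"
    using assms(3)[folded q_def] q by (auto simp: divide_less_eq)
  have "0 < (g - c) / (2*z)" "(g - c) / (2*z) < 1"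
    using assms(3)[folded q_def] assms(4)[folded z_def] q z by (simp_all add: divide_less_eq)
  then have k: "0 < (1 - (g - c) / (2*z)) / 2" "(1 - (g - c) / (2*z)) / 2 < 1"
    by simp_all
  show ?thesis
    unfolding differentiable_def RS_def r2_def k1_def
    using z q den amplitude r k ellK_pos[of "sqrt ((1 - (g - c) / (2*z)) / 2)"] unfolding z_def q_def
    by (intro exI) (rule derivative_intros | (simp; fail))+
qed

theorem mainTheorem7:
  fixes \<mu> g c :: real
  assumes "0 < \<mu>" and "\<mu> \<le> 1/2"
    and "(g, c) \<in> regionS \<mu>"
  shows "\<exists>dg dc. ((\<lambda>p. RS \<mu> (fst p) (snd p)) has_derivative (\<lambda>h. dg * fst h + dc * snd h)) (at (g, c))
                \<and> (dg, dc) \<noteq> (0, 0)"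
proof -
  note bounds = regionS_moduli_bounds[OF assms]
  obtain D where D: "((\<lambda>p. RS \<mu> (fst p) (snd p)) has_derivative D) (at (g, c))"
    using RS_differentiable[OF bounds(2-5)] unfolding differentiable_def by blast
  define x where "x = (g - c) / sqrt (1 - g*c)"
  have "g * c < 1" using bounds(2,3) by simp
  then have x: "x * sqrt (1 - g*c) = g - c" "x < 2"
    using bounds(5) by (simp_all add: x_def divide_less_eq mult.commute)
  have "((\<lambda>w. x * sqrt (1 - w)) has_real_derivative x * (- inverse (sqrt (1 - g*c)) / 2)) (at (g*c))"
    using \<open>g * c < 1\<close> by (auto intro!: derivative_eq_intros)
  from curve_with_difference_and_product[OF this DERIV_ident x(1) refl bounds(1)]
  obtain \<gamma> G where \<gamma>: "(\<gamma> has_derivative G) (at (g*c))" "\<gamma> (g*c) = (g, c)"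
    and on_curve: "\<forall>\<^sub>F w in nhds (g*c). fst (\<gamma> w) - snd (\<gamma> w) = x * sqrt (1 - w) \<and> fst (\<gamma> w) * snd (\<gamma> w) = w"
    by blast
  obtain e where "e \<noteq> 0" "((\<lambda>w. RS \<mu> (fst (\<gamma> w)) (snd (\<gamma> w))) has_real_derivative e) (at (g*c))"
    using RS_on_level_curve_has_nonzero_derivative[OF bounds(3,2) x(2) _ on_curve] bounds(4) x(1) by auto
  then show ?thesis
    using nonzero_gradient_from_curve[OF _ \<gamma>(1)] D \<gamma>(2) by fastforce
qed

end
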